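(* Let $\mathbf{W}=\langle W;\to,\neg,{}^{+},{}^{-},1\rangle$ be a quasi-Wajsberg* algebra and $0:=1\to 1$. Then: (1) $0\to 1=1$ and $0\to\neg 1=\neg 1$; (2) $1\to 0=\neg 1$ and $\neg 1\to 0=1$; (3) $\neg 1\to 1=1$ and $1\to\neg 1=\neg 1$; (4) $0^{+}=0=0^{-}$, $1^{+}=1$, $(\neg 1)^{-}=\neg 1$; (5) $1^{-}=0=(\neg 1)^{+}$.
   Context: A quasi-Wajsberg* algebra is an algebra $\langle W;\to,\neg,{}^{+},{}^{-},1\rangle$ of type $\langle2,1,1,1,0\rangle$ such that for all $x,y,z\in W$: (QW*1) $x\to y=\neg y\to\neg x$; (QW*2) $(x\to 1)\to((y\to 1)\to z)=(y\to 1)\to((x\to 1)\to z)$; (QW*3) $(1\to x)\to 1=1$; (QW*4) $(z\to z)\to(x\to y)=x\to y$; (QW*5) $(1\to 1)\to x^{+}=((1\to 1)\to x)^{+}=(x\to 1)\to 1$ and $(1\to 1)\to x^{-}=((1\to 1)\to x)^{-}=(x\to\neg 1)\to\neg 1$; (QW*6) $x\to y=(y^{+}\to x^{-})\to(x^{+}\to y^{-})$; (QW*7) $\neg(x\to y)=y\to x$; (QW*8) $\neg\neg x=x$; (QW*9) $(x\to(\neg x\to y))^{+}=x^{+}\to(\neg x^{+}\to y^{+})$; (QW*10) $x\vee y=y\vee x$; (QW*11) $x\vee(y\vee z)=(x\vee y)\vee z$; (QW*12) $x\to(y\vee z)=(x\to y)\vee(x\to z)$; where $x\vee y:=((x^{+}\to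 y^{+})^{+}\to(\neg x)^{-})\to((y^{-}\to x^{-})^{-}\to x^{-})$. Conventions: ${}^+,{}^-$ bind tighter than $\neg$, which binds tighter than $\to$. *)

theory Defs
  imports Main
begin

text \<open>Quasi-Wajsberg* algebras. The carrier W is the whole type 'a;
  imp = implication, neg = negation, pl = the unary operation (.)^+,
  mi = the unary operation (.)^-, one = the constant 1.\<close>

definition qw_join ::
  "('a \<Rightarrow> 'a \<Rightarrow> 'a) \<Rightarrow> ('a \<Rightarrow> 'a) \<Rightarrow> ('a \<Rightarrow> 'a) \<Rightarrow> ('a \<Rightarrow> 'a) \<Rightarrow> 'a \<Rightarrow> 'a \<Rightarrow> 'a"
  where
  "qw_join imp neg pl mi x y =
     imp (imp (pl (imp (pl x) (pl y))) (mi (neg x)))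
         (imp (mi (imp (mi y) (mi x))) (mi x))"

definition quasi_wajsberg_star ::
  "('a \<Rightarrow> 'a \<Rightarrow> 'a) \<Rightarrow> ('a \<Rightarrow> 'a) \<Rightarrow> ('a \<Rightarrow> 'a) \<Rightarrow> ('a \<Rightarrow> 'a) \<Rightarrow> 'a \<Rightarrow> bool"
  where
  "quasi_wajsberg_star imp neg pl mi one \<longleftrightarrow>
    (\<forall>x y. imp x y = imp (neg y) (neg x)) \<and>
    (\<forall>x y z. imp (imp x one) (imp (imp y one) z) = imp (imp y one) (imp (imp x one) z)) \<and>
    (\<forall>x. imp (imp one x) one = one) \<and>
    (\<forall>x y z. imp (imp z z) (imp x y) = imp x y) \<and>
    (\<forall>x. imp (imp one one) (pl x) = pl (imp (imp one one) x) \<and>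
         pl (imp (imp one one) x) = imp (imp x one) one) \<and>
    (\<forall>x. imp (imp one one) (mi x) = mi (imp (imp one one) x) \<and>
         mi (imp (imp one one) x) = imp (imp x (neg one)) (neg one)) \<and>
    (\<forall>x y. imp x y = imp (imp (pl y) (mi x)) (imp (pl x) (mi y))) \<and>
    (\<forall>x y. neg (imp x y) = imp y x) \<and>
    (\<forall>x. neg (neg x) = x) \<and>
    (\<forall>x y. pl (imp x (imp (neg x) y)) = imp (pl x) (imp (neg (pl x)) (pl y))) \<and>
    (\<forall>x y. qw_join imp neg pl mi x y = qw_join imp neg pl mi y x) \<and>
    (\<forall>x y z. qw_join imp neg pl mi x (qw_join imp neg pl mi y z) =
             qw_join imp neg pl mi (qw_join imp neg pl mi x y) z) \<and>
    (\<forall>x y z. imp x (qw_join imp neg pl mi y z) =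
             qw_join imp neg pl mi (imp x y) (imp x z))"

end

theory Submission
  imports Defs
begin

text \<open>Axioms (QW*1), (QW*3), (QW*4), the second equations of (QW*5), (QW*7) and (QW*8).\<close>

locale qw_star_fragment =
  fixes imp :: "'a \<Rightarrow> 'a \<Rightarrow> 'a" and neg pl mi :: "'a \<Rightarrow> 'a" and one :: 'a
  assumes imp_contrapos: "imp x y = imp (neg y) (neg x)"
    and imp_one_left_imp_one: "imp (imp one x) one = one"
    and imp_refl_left: "imp (imp z z) (imp x y) = imp x y"
    and pl_zero_imp: "pl (imp (imp one one) x) = imp (imp x one) one"
    and mi_zero_imp: "mi (imp (imp one one) x) = imp (imp x (neg one)) (neg one)"
    and neg_imp: "neg (imp x y) = imp y x"
    and neg_neg: "neg (neg x) = x"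
begin

abbreviation zero :: 'a where "zero \<equiv> imp one one"

lemma zero_imp_one: "imp zero one = one"
  using imp_one_left_imp_one [of one] .

lemma zero_imp_zero: "imp zero zero = zero"
  using imp_refl_left [of one one one] .

lemma one_imp_zero: "imp one zero = neg one"
  using neg_imp [of zero one] by (simp only: zero_imp_one)

lemma zero_imp_neg_one: "imp zero (neg one) = neg one"
  unfolding one_imp_zero [symmetric] by (rule imp_refl_left)

lemma neg_one_imp_zero: "imp (neg one) zero = one"
  using neg_imp [of zero "neg one"] by (simp only: zero_imp_neg_one neg_neg)

lemma neg_one_imp_one: "imp (neg one) one = one"
  unfolding one_imp_zero [symmetric] by (rule imp_one_left_imp_one)

lemma one_imp_neg_one: "imp one (neg one) = neg one"
  using neg_imp [of "neg one" one] by (simp only: neg_one_imp_one)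

lemma neg_one_imp_neg_one: "imp (neg one) (neg one) = zero"
  using imp_contrapos [of one one] by simp

lemma pl_one: "pl one = one"
  using pl_zero_imp [of one] by (simp only: zero_imp_one)

lemma pl_zero: "pl zero = zero"
  using pl_zero_imp [of zero] by (simp only: zero_imp_zero zero_imp_one)

lemma pl_neg_one: "pl (neg one) = zero"
  using pl_zero_imp [of "neg one"] by (simp only: zero_imp_neg_one neg_one_imp_one)

lemma mi_zero: "mi zero = zero"
  using mi_zero_imp [of zero] by (simp only: zero_imp_zero zero_imp_neg_one neg_one_imp_neg_one)

lemma mi_neg_one: "mi (neg one) = neg one"
  using mi_zero_imp [of "neg one"] by (simp only: zero_imp_neg_one neg_one_imp_neg_one)

lemma mi_one: "mi one = zero"
  using mi_zero_imp [of one] by (simp only: zero_imp_one one_imp_neg_one neg_one_imp_neg_one)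

end

lemma quasi_wajsberg_star_imp_fragment:
  assumes "quasi_wajsberg_star imp neg pl mi one"
  shows "qw_star_fragment imp neg pl mi one"
  using assms unfolding quasi_wajsberg_star_def by unfold_locales meson+

theorem proposition3p2:
  fixes imp :: "'a \<Rightarrow> 'a \<Rightarrow> 'a" and neg pl mi :: "'a \<Rightarrow> 'a" and one :: 'a
  assumes "quasi_wajsberg_star imp neg pl mi one"
  defines "zero \<equiv> imp one one"
  shows "(imp zero one = one \<and> imp zero (neg one) = neg one) \<and>
         (imp one zero = neg one \<and> imp (neg one) zero = one) \<and>
         (imp (neg one) one = one \<and> imp one (neg one) = neg one) \<and>
         (pl zero = zero \<and> zero = mi zero \<and> pl one = one \<and> mi (neg one) = neg one) \<and>
         (mi one = zero \<and> zero = pl (neg one))"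
proof -
  interpret qw_star_fragment imp neg pl mi one
    using assms(1) by (rule quasi_wajsberg_star_imp_fragment)
  show ?thesis
    unfolding zero_def
    by (simp add: zero_imp_one zero_imp_neg_one one_imp_zero neg_one_imp_zero neg_one_imp_one
        one_imp_neg_one pl_zero mi_zero pl_one mi_neg_one mi_one pl_neg_one)
qed

end
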